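(* Every $\mathbb{B}$-sober bitopological space is d-sober, and hence join sober (i.e. the topological space $(X,\tau[tt]\vee\tau[ff])$ is sober).
   Context: $\mathbb{B}=\{0,1,tt,ff\}$ is the four-element Boolean algebra with bottom $0$, top $1$, and $tt,ff$ incomparable complements. A bitopological space $(X,\tau[tt],\tau[ff])$ is identified with the $\mathbb{B}$-topology $\tau=\{\lambda\colon X\to\mathbb{B}: \lambda[tt]\in\tau[tt],\ \lambda[ff]\in\tau[ff]\}$, where $\lambda[b]=\{x:\lambda(x)\ge b\}$; $b_X$ is the constant map with value $b$. A $\mathbb{B}$-point of $\tau$ is a frame homomorphism $p\colon\tau\to\mathbb{B}$ with $p(b_X)=b$ for all $b$; the space is $\mathbb{B}$-sober if for every $\mathbb{B}$-point $p$ there is a unique $x$ with $p(\lambda)=\lambda(x)$ for all $\lambda\in\tau$. A d-point of $(X,\tau[tt],\tau[ff])$ is a pair of frame homomorphisms $p_{tt}\colon\tau[tt]\to\{0,1\}$, $p_{ff}\colon\tau[ff]\to\{0,1\}$ such that: if $U\in\tau[tt]$, $V\in\tau[ff]$ and $U\cap V=\emptyset$ then $p_{tt}(U)=0$ or $p_{ff}(V)=0$; and if $U\cup V=X$ then $p_{tt}(U)=1$ or $p_{ff}(V)=1$. Each $x\in X$ gives the d-point $[x]$ with $[x]_{tt}(U)=1\iff x\in U$, $[x]_{ff}(V)=1\iff x\in V$. The space is d-sober if every d-point equals $[x]$ for a unique $x$. A topological space is sober if every irreducible closed set is the closure of a unique point. *)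

theory Defs
  imports "HOL-Analysis.Analysis" "HOL-Library.Product_Order"
begin

text \<open>The four-element Boolean algebra B = {0,1,tt,ff} is modelled as bool \<times> bool with the
componentwise (product) order: 0 = (False,False), 1 = (True,True), tt = (True,False),
ff = (False,True).\<close>

type_synonym B4 = "bool \<times> bool"

definition bzero :: B4 where "bzero = (False, False)"
definition bone :: B4 where "bone = (True, True)"
definition btt :: B4 where "btt = (True, False)"
definition bff :: B4 where "bff = (False, True)"

text \<open>A bitopological space is a pair of topologies T1 = tau[tt], T2 = tau[ff] on the same carrier.\<close>

definition bitop_space :: "'a topology \<Rightarrow> 'a topology \<Rightarrow> bool" where
  "bitop_space T1 T2 \<longleftrightarrow> topspace T1 = topspace T2"

definition bcut :: "'a set \<Rightarrow> ('a \<Rightarrow> B4) \<Rightarrow> B4 \<Rightarrow> 'a set" where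
  "bcut X l b = {x \<in> X. b \<le> l x}"

definition bconst :: "'a set \<Rightarrow> B4 \<Rightarrow> 'a \<Rightarrow> B4" where
  "bconst X b = (\<lambda>x. if x \<in> X then b else bzero)"

definition btopology :: "'a topology \<Rightarrow> 'a topology \<Rightarrow> ('a \<Rightarrow> B4) set" where
  "btopology T1 T2 = {l. (\<forall>x. x \<notin> topspace T1 \<longrightarrow> l x = bzero)
       \<and> openin T1 (bcut (topspace T1) l btt) \<and> openin T2 (bcut (topspace T1) l bff)}"

text \<open>B-point: frame homomorphism tau \<rightarrow> B (joins and finite meets in tau are pointwise)
with p(b_X) = b for all b.\<close>
definition B_point :: "'a topology \<Rightarrow> 'a topology \<Rightarrow> (('a \<Rightarrow> B4) \<Rightarrow> B4) \<Rightarrow> bool" where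
  "B_point T1 T2 p \<longleftrightarrow>
     (\<forall>S. S \<subseteq> btopology T1 T2 \<longrightarrow> p (Sup S) = Sup (p ` S))
   \<and> (\<forall>l \<in> btopology T1 T2. \<forall>m \<in> btopology T1 T2. p (inf l m) = inf (p l) (p m))
   \<and> (\<forall>b. p (bconst (topspace T1) b) = b)"

definition B_sober :: "'a topology \<Rightarrow> 'a topology \<Rightarrow> bool" where
  "B_sober T1 T2 \<longleftrightarrow> (\<forall>p. B_point T1 T2 p \<longrightarrow>
      (\<exists>!x. x \<in> topspace T1 \<and> (\<forall>l \<in> btopology T1 T2. p l = l x)))"

definition frame_hom2 :: "'a topology \<Rightarrow> ('a set \<Rightarrow> bool) \<Rightarrow> bool" where
  "frame_hom2 T p \<longleftrightarrow>
     (\<forall>S. (\<forall>U \<in> S. openin T U) \<longrightarrow> p (\<Union>S) = (\<exists>U \<in> S. p U))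
   \<and> (\<forall>U V. openin T U \<longrightarrow> openin T V \<longrightarrow> p (U \<inter> V) = (p U \<and> p V))
   \<and> p (topspace T)"

definition d_point :: "'a topology \<Rightarrow> 'a topology \<Rightarrow> ('a set \<Rightarrow> bool) \<Rightarrow> ('a set \<Rightarrow> bool) \<Rightarrow> bool" where
  "d_point T1 T2 ptt pff \<longleftrightarrow> frame_hom2 T1 ptt \<and> frame_hom2 T2 pff
   \<and> (\<forall>U V. openin T1 U \<longrightarrow> openin T2 V \<longrightarrow> U \<inter> V = {} \<longrightarrow> \<not> ptt U \<or> \<not> pff V)
   \<and> (\<forall>U V. openin T1 U \<longrightarrow> openin T2 V \<longrightarrow> U \<union> V = topspace T1 \<longrightarrow> ptt U \<or> pff V)"

definition d_sober :: "'a topology \<Rightarrow> 'a topology \<Rightarrow> bool" where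
  "d_sober T1 T2 \<longleftrightarrow> (\<forall>ptt pff. d_point T1 T2 ptt pff \<longrightarrow>
      (\<exists>!x. x \<in> topspace T1 \<and> (\<forall>U. openin T1 U \<longrightarrow> ptt U = (x \<in> U))
                             \<and> (\<forall>V. openin T2 V \<longrightarrow> pff V = (x \<in> V))))"

definition irreducible_closed :: "'a topology \<Rightarrow> 'a set \<Rightarrow> bool" where
  "irreducible_closed T C \<longleftrightarrow> closedin T C \<and> C \<noteq> {} \<and>
     (\<forall>A B. closedin T A \<longrightarrow> closedin T B \<longrightarrow> C \<subseteq> A \<union> B \<longrightarrow> C \<subseteq> A \<or> C \<subseteq> B)"

definition sober :: "'a topology \<Rightarrow> bool" where
  "sober T \<longleftrightarrow> (\<forall>C. irreducible_closed T C \<longrightarrow> (\<exists>!x. x \<in> topspace T \<and> C = T closure_of {x}))"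

definition join_top :: "'a topology \<Rightarrow> 'a topology \<Rightarrow> 'a topology" where
  "join_top T1 T2 = topology_generated_by {U. openin T1 U \<or> openin T2 U}"

end

theory Submission
  imports Defs
begin

text \<open>The \<open>\<B>\<close>-topology is the product of the frames \<open>\<tau>[tt]\<close> and \<open>\<tau>[ff]\<close>, so any
pair of frame homomorphisms \<open>(p\<^sub>t\<^sub>t, p\<^sub>f\<^sub>f)\<close> yields the \<open>\<B>\<close>-point
\<open>\<lambda> \<mapsto> (p\<^sub>t\<^sub>t \<lambda>[tt], p\<^sub>f\<^sub>f \<lambda>[ff])\<close>, and a point represents one exactly when it
represents the other (testing against \<open>\<lambda> = (U, V)\<close>). Hence \<open>\<B>\<close>-sobriety gives
d-sobriety without even using the separation conditions of a d-point. For join sobriety, an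
irreducible closed set \<open>C\<close> of the join topology gives the d-point "\<open>U\<close> meets \<open>C\<close>"; its
representing point \<open>x\<close> meets the subbasic opens exactly as \<open>C\<close> does, irreducibility
propagates this through finite intersections to all opens of the join, and a closed set met by
the opens containing \<open>x\<close> and no others is the closure of \<open>x\<close>.\<close>

lemma bcut_btt_eq: "bcut X l btt = {x\<in>X. fst (l x)}"
  by (auto simp: bcut_def btt_def less_eq_prod_def)

lemma bcut_bff_eq: "bcut X l bff = {x\<in>X. snd (l x)}"
  by (auto simp: bcut_def bff_def less_eq_prod_def)

lemma frame_hom2_empty: "frame_hom2 T p \<Longrightarrow> \<not> p {}"
  unfolding frame_hom2_def by (metis Sup_empty empty_iff)

lemma openin_bcuts:
  assumes "l \<in> btopology T1 T2"
  shows "openin T1 {x\<in>topspace T1. fst (l x)}" "openin T2 {x\<in>topspace T1. snd (l x)}"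
  using assms by (auto simp: btopology_def bcut_btt_eq bcut_bff_eq)

lemma btopology_pair_indicator:
  assumes "bitop_space T1 T2" "openin T1 U" "openin T2 V"
  shows "(\<lambda>z. (z \<in> U, z \<in> V)) \<in> btopology T1 T2"
proof -
  have "U \<subseteq> topspace T1" using assms(2) by (rule openin_subset)
  moreover have "V \<subseteq> topspace T1"
    using openin_subset[OF assms(3)] assms(1) by (simp add: bitop_space_def)
  ultimately have "{x\<in>topspace T1. x \<in> U} = U" "{x\<in>topspace T1. x \<in> V} = V"
    and "\<forall>x. x \<notin> topspace T1 \<longrightarrow> (x \<in> U, x \<in> V) = bzero"
    by (auto simp: bzero_def)
  with assms(2,3) show ?thesis
    by (simp add: btopology_def bcut_btt_eq bcut_bff_eq)
qed

definition B_point_of_pair ::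
  "'a set \<Rightarrow> ('a set \<Rightarrow> bool) \<Rightarrow> ('a set \<Rightarrow> bool) \<Rightarrow> ('a \<Rightarrow> B4) \<Rightarrow> B4" where
  "B_point_of_pair X ptt pff l = (ptt (bcut X l btt), pff (bcut X l bff))"

lemma B_point_of_pair_apply:
  "B_point_of_pair X ptt pff l = (ptt {x\<in>X. fst (l x)}, pff {x\<in>X. snd (l x)})"
  by (simp add: B_point_of_pair_def bcut_btt_eq bcut_bff_eq)

lemma frame_hom2_Union_image:
  assumes "frame_hom2 T p" "\<And>l. l \<in> S \<Longrightarrow> openin T (U l)"
  shows "p (\<Union>l\<in>S. U l) = (\<exists>l\<in>S. p (U l))"
proof -
  have "\<forall>V\<in>U ` S. openin T V" using assms(2) by blast
  moreover have "\<And>\<V>. \<forall>V\<in>\<V>. openin T V \<Longrightarrow> p (\<Union>\<V>) = (\<exists>V\<in>\<V>. p V)"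
    using assms(1) by (simp add: frame_hom2_def)
  ultimately show ?thesis by simp
qed

lemma B_point_B_point_of_pair:
  assumes bt: "bitop_space T1 T2" and f1: "frame_hom2 T1 ptt" and f2: "frame_hom2 T2 pff"
  shows "B_point T1 T2 (B_point_of_pair (topspace T1) ptt pff)"
    (is "B_point _ _ ?p")
  unfolding B_point_def
proof (intro conjI allI impI ballI)
  fix S assume S: "S \<subseteq> btopology T1 T2"
  have "{x\<in>topspace T1. fst (Sup S x)} = (\<Union>l\<in>S. {x\<in>topspace T1. fst (l x)})"
       "{x\<in>topspace T1. snd (Sup S x)} = (\<Union>l\<in>S. {x\<in>topspace T1. snd (l x)})"
    by (auto simp: fst_Sup snd_Sup Sup_apply image_image)
  moreover have "ptt (\<Union>l\<in>S. {x\<in>topspace T1. fst (l x)}) =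
                   (\<exists>l\<in>S. ptt {x\<in>topspace T1. fst (l x)})"
    by (rule frame_hom2_Union_image[OF f1]) (use openin_bcuts S in blast)
  moreover have "pff (\<Union>l\<in>S. {x\<in>topspace T1. snd (l x)}) =
                   (\<exists>l\<in>S. pff {x\<in>topspace T1. snd (l x)})"
    by (rule frame_hom2_Union_image[OF f2]) (use openin_bcuts S in blast)
  ultimately have "fst (?p (Sup S)) = (\<exists>l\<in>S. fst (?p l))"
                  "snd (?p (Sup S)) = (\<exists>l\<in>S. snd (?p l))"
    by (simp_all only: B_point_of_pair_apply fst_conv snd_conv)
  moreover have "fst (Sup (?p ` S)) = (\<exists>l\<in>S. fst (?p l))"
                "snd (Sup (?p ` S)) = (\<exists>l\<in>S. snd (?p l))"
    by (simp_all add: fst_Sup snd_Sup image_image)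
  ultimately show "?p (Sup S) = Sup (?p ` S)"
    by (simp add: prod_eq_iff)
next
  fix l m assume "l \<in> btopology T1 T2" "m \<in> btopology T1 T2"
  moreover have
    "{x\<in>topspace T1. fst (inf l m x)} = {x\<in>topspace T1. fst (l x)} \<inter> {x\<in>topspace T1. fst (m x)}"
    "{x\<in>topspace T1. snd (inf l m x)} = {x\<in>topspace T1. snd (l x)} \<inter> {x\<in>topspace T1. snd (m x)}"
    by auto
  ultimately show "?p (inf l m) = inf (?p l) (?p m)"
    using f1 f2 openin_bcuts[of l] openin_bcuts[of m]
    unfolding B_point_of_pair_apply frame_hom2_def by simp
next
  fix b :: B4
  have "{x\<in>topspace T1. fst (bconst (topspace T1) b x)} = (if fst b then topspace T1 else {})"
       "{x\<in>topspace T1. snd (bconst (topspace T1) b x)} = (if snd b then topspace T1 else {})"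
    by (auto simp: bconst_def)
  moreover have "ptt (topspace T1)" "pff (topspace T1)"
    using f1 f2 bt by (auto simp: frame_hom2_def bitop_space_def)
  ultimately show "?p (bconst (topspace T1) b) = b"
    using frame_hom2_empty[OF f1] frame_hom2_empty[OF f2]
    by (simp add: B_point_of_pair_apply prod_eq_iff)
qed

lemma B_point_of_pair_represented_iff:
  assumes "bitop_space T1 T2" "x \<in> topspace T1"
  shows "(\<forall>l\<in>btopology T1 T2. B_point_of_pair (topspace T1) ptt pff l = l x) \<longleftrightarrow>
         (\<forall>U. openin T1 U \<longrightarrow> ptt U = (x \<in> U)) \<and> (\<forall>V. openin T2 V \<longrightarrow> pff V = (x \<in> V))"
proof
  assume rep: "\<forall>l\<in>btopology T1 T2. B_point_of_pair (topspace T1) ptt pff l = l x"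
  have "ptt U = (x \<in> U) \<and> pff V = (x \<in> V)" if "openin T1 U" "openin T2 V" for U V
  proof -
    have "U \<subseteq> topspace T1" "V \<subseteq> topspace T1"
      using that assms(1) openin_subset unfolding bitop_space_def by metis+
    then have "{z\<in>topspace T1. z \<in> U} = U" "{z\<in>topspace T1. z \<in> V} = V" by auto
    moreover have
      "B_point_of_pair (topspace T1) ptt pff (\<lambda>z. (z \<in> U, z \<in> V)) = (x \<in> U, x \<in> V)"
      using rep btopology_pair_indicator[OF assms(1) that] by blast
    ultimately show ?thesis by (simp add: B_point_of_pair_apply)
  qed
  then show "(\<forall>U. openin T1 U \<longrightarrow> ptt U = (x \<in> U)) \<and> (\<forall>V. openin T2 V \<longrightarrow> pff V = (x \<in> V))"
    using openin_empty by blast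
next
  assume rep: "(\<forall>U. openin T1 U \<longrightarrow> ptt U = (x \<in> U)) \<and> (\<forall>V. openin T2 V \<longrightarrow> pff V = (x \<in> V))"
  show "\<forall>l\<in>btopology T1 T2. B_point_of_pair (topspace T1) ptt pff l = l x"
  proof
    fix l assume "l \<in> btopology T1 T2"
    then have "ptt {z\<in>topspace T1. fst (l z)} = fst (l x)"
              "pff {z\<in>topspace T1. snd (l z)} = snd (l x)"
      using rep openin_bcuts[of l T1 T2] assms(2) by auto
    then show "B_point_of_pair (topspace T1) ptt pff l = l x"
      by (simp add: B_point_of_pair_apply prod_eq_iff)
  qed
qed

lemma d_sober_if_B_sober:
  assumes bt: "bitop_space T1 T2" and "B_sober T1 T2"
  shows "d_sober T1 T2"
  unfolding d_sober_def
proof (intro allI impI)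
  fix ptt pff assume "d_point T1 T2 ptt pff"
  then have "B_point T1 T2 (B_point_of_pair (topspace T1) ptt pff)"
    using B_point_B_point_of_pair[OF bt] by (simp add: d_point_def)
  then have "\<exists>!x. x \<in> topspace T1 \<and>
      (\<forall>l\<in>btopology T1 T2. B_point_of_pair (topspace T1) ptt pff l = l x)"
    using \<open>B_sober T1 T2\<close> unfolding B_sober_def by blast
  then show "\<exists>!x. x \<in> topspace T1 \<and> (\<forall>U. openin T1 U \<longrightarrow> ptt U = (x \<in> U))
                              \<and> (\<forall>V. openin T2 V \<longrightarrow> pff V = (x \<in> V))"
    using B_point_of_pair_represented_iff[OF bt] by (simp cong: conj_cong)
qed

lemma closed_eq_closure_of_singleton_iff:
  assumes "closedin T C" "x \<in> topspace T"
  shows "C = T closure_of {x} \<longleftrightarrow> (\<forall>W. openin T W \<longrightarrow> (W \<inter> C \<noteq> {}) = (x \<in> W))"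
proof
  assume "C = T closure_of {x}"
  then show "\<forall>W. openin T W \<longrightarrow> (W \<inter> C \<noteq> {}) = (x \<in> W)"
    using openin_Int_closure_of_eq_empty by blast
next
  assume meets: "\<forall>W. openin T W \<longrightarrow> (W \<inter> C \<noteq> {}) = (x \<in> W)"
  have "x \<in> C"
    using meets[rule_format, of "topspace T - C"] assms by (auto simp: closedin_def)
  then have "T closure_of {x} \<subseteq> C" using assms(1) by (simp add: closure_of_minimal)
  moreover have "C \<subseteq> T closure_of {x}"
  proof
    fix y assume "y \<in> C"
    then have "x \<in> W" if "openin T W" "y \<in> W" for W
      using meets that by blast
    with \<open>y \<in> C\<close> closedin_subset[OF assms(1)] show "y \<in> T closure_of {x}"
      by (auto simp: in_closure_of)
  qed
  ultimately show "C = T closure_of {x}" by blast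
qed

lemma irreducible_closed_Int_meets:
  assumes "irreducible_closed T C" "openin T U" "openin T V" "U \<inter> C \<noteq> {}" "V \<inter> C \<noteq> {}"
  shows "U \<inter> V \<inter> C \<noteq> {}"
proof
  assume "U \<inter> V \<inter> C = {}"
  moreover have "C \<subseteq> topspace T" using assms(1) closedin_subset irreducible_closed_def by blast
  ultimately have "C \<subseteq> (topspace T - U) \<union> (topspace T - V)" by blast
  moreover have "closedin T (topspace T - U)" "closedin T (topspace T - V)"
    using assms(2,3) by (simp_all add: closedin_diff)
  ultimately have "C \<subseteq> topspace T - U \<or> C \<subseteq> topspace T - V"
    using assms(1) unfolding irreducible_closed_def by blast
  with assms(4,5) show False by blast
qed

lemma openin_join_top_iff:
  "openin (join_top T1 T2) W \<longleftrightarrow> generate_topology_on {U. openin T1 U \<or> openin T2 U} W"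
  unfolding join_top_def by (rule openin_topology_generated_by_iff)

lemma openin_join_top:
  "openin T1 U \<or> openin T2 U \<Longrightarrow> openin (join_top T1 T2) U"
  by (simp add: openin_join_top_iff generate_topology_on.Basis)

lemma topspace_join_top:
  assumes "bitop_space T1 T2"
  shows "topspace (join_top T1 T2) = topspace T1"
  using assms openin_subset[of T1] openin_subset[of T2] openin_topspace[of T1]
  unfolding join_top_def topology_generated_by_topspace bitop_space_def by blast

lemma d_point_meets_irreducible_closed:
  assumes bt: "bitop_space T1 T2" and C: "irreducible_closed (join_top T1 T2) C"
  shows "d_point T1 T2 (\<lambda>U. U \<inter> C \<noteq> {}) (\<lambda>U. U \<inter> C \<noteq> {})"
proof -
  have C_sub: "C \<subseteq> topspace T1" "C \<noteq> {}"
    using C closedin_subset topspace_join_top[OF bt] by (auto simp: irreducible_closed_def)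
  have meets_Int: "U \<inter> V \<inter> C \<noteq> {} \<longleftrightarrow> U \<inter> C \<noteq> {} \<and> V \<inter> C \<noteq> {}"
    if "openin (join_top T1 T2) U" "openin (join_top T1 T2) V" for U V
    using irreducible_closed_Int_meets[OF C that] by blast
  have frame: "frame_hom2 T (\<lambda>U. U \<inter> C \<noteq> {})"
    if "\<And>U. openin T U \<Longrightarrow> openin (join_top T1 T2) U" "topspace T = topspace T1" for T
    unfolding frame_hom2_def using that meets_Int C_sub by auto
  have "frame_hom2 T1 (\<lambda>U. U \<inter> C \<noteq> {})"
    by (rule frame) (simp_all add: openin_join_top)
  moreover have "frame_hom2 T2 (\<lambda>U. U \<inter> C \<noteq> {})"
    by (rule frame) (use bt in \<open>simp_all add: openin_join_top bitop_space_def\<close>)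
  moreover have "\<not> (U \<inter> C \<noteq> {} \<and> V \<inter> C \<noteq> {})"
    if "openin T1 U" "openin T2 V" "U \<inter> V = {}" for U V
    using that meets_Int[of U V] by (simp add: openin_join_top)
  moreover have "U \<inter> C \<noteq> {} \<or> V \<inter> C \<noteq> {}" if "U \<union> V = topspace T1" for U V
    using that C_sub by blast
  ultimately show ?thesis
    unfolding d_point_def by blast
qed

lemma join_top_meets_iff:
  assumes C: "irreducible_closed (join_top T1 T2) C"
    and sub: "\<And>U. openin T1 U \<or> openin T2 U \<Longrightarrow> (U \<inter> C \<noteq> {}) = (x \<in> U)"
    and W: "openin (join_top T1 T2) W"
  shows "(W \<inter> C \<noteq> {}) = (x \<in> W)"
  using W[unfolded openin_join_top_iff]
proof induction
  case (Int a b)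
  then show ?case
    using irreducible_closed_Int_meets[OF C] by (auto simp: openin_join_top_iff)
next
  case (UN K)
  then show ?case by blast
qed (use sub in auto)

lemma irreducible_closed_join_top_eq_closure_of_iff:
  assumes bt: "bitop_space T1 T2" and C: "irreducible_closed (join_top T1 T2) C"
    and x: "x \<in> topspace T1"
  shows "C = join_top T1 T2 closure_of {x} \<longleftrightarrow>
           (\<forall>U. openin T1 U \<longrightarrow> (U \<inter> C \<noteq> {}) = (x \<in> U)) \<and>
           (\<forall>V. openin T2 V \<longrightarrow> (V \<inter> C \<noteq> {}) = (x \<in> V))"
    (is "_ \<longleftrightarrow> ?generic")
proof -
  have "closedin (join_top T1 T2) C" using C by (simp add: irreducible_closed_def)
  moreover have "x \<in> topspace (join_top T1 T2)" using x topspace_join_top[OF bt] by simp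
  ultimately have "C = join_top T1 T2 closure_of {x} \<longleftrightarrow>
      (\<forall>W. openin (join_top T1 T2) W \<longrightarrow> (W \<inter> C \<noteq> {}) = (x \<in> W))"
    by (rule closed_eq_closure_of_singleton_iff)
  also have "\<dots> \<longleftrightarrow> ?generic"
  proof
    assume H: "\<forall>W. openin (join_top T1 T2) W \<longrightarrow> (W \<inter> C \<noteq> {}) = (x \<in> W)"
    have "(U \<inter> C \<noteq> {}) = (x \<in> U)" if "openin T1 U \<or> openin T2 U" for U
      using H openin_join_top[OF that] by blast
    then show ?generic by blast
  next
    assume ?generic
    then have sub: "(U \<inter> C \<noteq> {}) = (x \<in> U)" if "openin T1 U \<or> openin T2 U" for U
      using that by blast
    show "\<forall>W. openin (join_top T1 T2) W \<longrightarrow> (W \<inter> C \<noteq> {}) = (x \<in> W)"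
      using join_top_meets_iff[OF C sub] by blast
  qed
  finally show ?thesis .
qed

lemma sober_join_top_if_d_sober:
  assumes bt: "bitop_space T1 T2" and ds: "d_sober T1 T2"
  shows "sober (join_top T1 T2)"
  unfolding sober_def topspace_join_top[OF bt]
proof (intro allI impI)
  fix C assume C: "irreducible_closed (join_top T1 T2) C"
  have "x \<in> topspace T1 \<and> C = join_top T1 T2 closure_of {x} \<longleftrightarrow>
        x \<in> topspace T1 \<and> (\<forall>U. openin T1 U \<longrightarrow> (U \<inter> C \<noteq> {}) = (x \<in> U))
                       \<and> (\<forall>V. openin T2 V \<longrightarrow> (V \<inter> C \<noteq> {}) = (x \<in> V))" for x
    using irreducible_closed_join_top_eq_closure_of_iff[OF bt C] by blast
  then show "\<exists>!x. x \<in> topspace T1 \<and> C = join_top T1 T2 closure_of {x}"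
    using ds d_point_meets_irreducible_closed[OF bt C] unfolding d_sober_def by presburger
qed

theorem mainTheorem8:
  fixes T1 T2 :: "'a topology"
  assumes "bitop_space T1 T2"
    and "B_sober T1 T2"
  shows "d_sober T1 T2 \<and> sober (join_top T1 T2)"
  using assms d_sober_if_B_sober sober_join_top_if_d_sober by blast

end
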